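(* Let $\Sigma\subset\mathbb{Q}^{n_1}_{\epsilon_1}\times\mathbb{Q}^{n_2}_{\epsilon_2}$ be an $(f_s^1,f_s^2,\phi)$-hypersurface with constant mean curvature. Then both families $\{f_s^1\}$ and $\{f_s^2\}$ are isoparametric, i.e., for each $s$ the hypersurface $f^i_s$ has constant mean curvature.
   Context: $\mathbb{Q}^m_\epsilon$ is the simply connected space form of dimension $m\ge2$ and curvature $\epsilon$, and the product carries the product metric. $(f_s^1,f_s^2,\phi)$-hypersurface: given hypersurfaces $M_i^{n_i-1}\subset\mathbb{Q}^{n_i}_{\epsilon_i}$ with unit normals $\eta$, an open interval $I$ and a diffeomorphism $\phi:I\to\phi(I)$, it is the image of the immersion $\Phi(p_1,p_2,s)=(\exp_{p_1}(s\eta_{p_1}),\exp_{p_2}(\phi(s)\eta_{p_2}))$ on $M_1\times M_2\times I$; $f^1_s(p_1)=\exp_{p_1}(s\eta_{p_1})$ and $f^2_s(p_2)=\exp_{p_2}(\phi(s)\eta_{p_2})$ are families of parallel hypersurfaces of the factors. Its mean curvature (sum of principal curvatures) is $H_\Sigma=\frac{\phi''}{W^3}-\frac{\phi'}{W}H_1^s(p_1)+\frac1W H_2^s(p_2)$, $W=\sqrt{1+\phi'^2}$, with $H_i^s$ the mean curvature of $f_s^i$. *)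

theory Defs
  imports "HOL-Analysis.Analysis"
begin

text \<open>Model of the space form Q^n_eps inside R^(n+1) = 'b \<times> real, where DIM('b) = n.
  The ambient bilinear form is x\<bullet>y + sgn(eps) t r (Euclidean for eps \<ge> 0,
  Lorentzian for eps < 0).\<close>

definition qform :: "real \<Rightarrow> ('b::euclidean_space \<times> real) \<Rightarrow> ('b \<times> real) \<Rightarrow> real" where
  "qform eps p q = fst p \<bullet> fst q + sgn eps * (snd p * snd q)"

definition Qspace :: "real \<Rightarrow> ('b::euclidean_space \<times> real) set" where
  "Qspace eps =
     (if eps > 0 then {p. qform eps p p = 1 / eps}
      else if eps < 0 then {p. qform eps p p = 1 / eps \<and> snd p > 0}
      else {p. snd p = 0})"

definition Qtangent :: "real \<Rightarrow> ('b::euclidean_space \<times> real) \<Rightarrow> ('b \<times> real) set" where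
  "Qtangent eps p = (if eps = 0 then {v. snd v = 0} else {v. qform eps p v = 0})"

text \<open>Generalized trigonometric functions: exp_p(s\<eta>) = cs eps s p + sn eps s \<eta> for unit \<eta>.\<close>
definition cs :: "real \<Rightarrow> real \<Rightarrow> real" where
  "cs eps s = (if eps > 0 then cos (sqrt eps * s)
               else if eps < 0 then cosh (sqrt (- eps) * s) else 1)"

definition sn :: "real \<Rightarrow> real \<Rightarrow> real" where
  "sn eps s = (if eps > 0 then sin (sqrt eps * s) / sqrt eps
               else if eps < 0 then sinh (sqrt (- eps) * s) / sqrt (- eps) else s)"

definition parallel :: "real \<Rightarrow> ('c \<Rightarrow> 'b::euclidean_space \<times> real) \<Rightarrow> ('c \<Rightarrow> 'b \<times> real)
                        \<Rightarrow> real \<Rightarrow> 'c \<Rightarrow> 'b \<times> real" where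
  "parallel eps X \<eta> s u = cs eps s *\<^sub>R X u + sn eps s *\<^sub>R \<eta> u"

definition pform :: "real \<Rightarrow> real \<Rightarrow> (('b1::euclidean_space \<times> real) \<times> ('b2::euclidean_space \<times> real))
                     \<Rightarrow> (('b1 \<times> real) \<times> ('b2 \<times> real)) \<Rightarrow> real" where
  "pform e1 e2 p q = qform e1 (fst p) (fst q) + qform e2 (snd p) (snd q)"

definition Ptangent :: "real \<Rightarrow> real \<Rightarrow> (('b1::euclidean_space \<times> real) \<times> ('b2::euclidean_space \<times> real))
                        \<Rightarrow> (('b1 \<times> real) \<times> ('b2 \<times> real)) set" where
  "Ptangent e1 e2 p = Qtangent e1 (fst p) \<times> Qtangent e2 (snd p)"

definition C1_on :: "'a::euclidean_space set \<Rightarrow> ('a \<Rightarrow> 'e::real_normed_vector) \<Rightarrow> bool" where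
  "C1_on U F \<longleftrightarrow> (\<forall>u\<in>U. F differentiable (at u)) \<and>
      (\<forall>b\<in>Basis. continuous_on U (\<lambda>u. frechet_derivative F (at u) b))"

definition hypersurface ::
  "('e \<Rightarrow> 'e \<Rightarrow> real) \<Rightarrow> 'e set \<Rightarrow> ('e \<Rightarrow> 'e set) \<Rightarrow> ('a::euclidean_space \<Rightarrow> 'e::euclidean_space)
   \<Rightarrow> ('a \<Rightarrow> 'e) \<Rightarrow> 'a set \<Rightarrow> bool" where
  "hypersurface g A T F \<nu> U \<longleftrightarrow>
     open U \<and> connected U \<and> U \<noteq> {} \<and> C1_on U F \<and> C1_on U \<nu> \<and>
     (\<forall>u\<in>U. F u \<in> A \<and> inj (frechet_derivative F (at u)) \<and>
        (\<forall>w. frechet_derivative F (at u) w \<in> T (F u)) \<and>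
        \<nu> u \<in> T (F u) \<and> g (\<nu> u) (\<nu> u) = 1 \<and>
        (\<forall>w. g (\<nu> u) (frechet_derivative F (at u) w) = 0))"

text \<open>Mean curvature (trace of the shape operator A = -d\<nu>) computed in a frame
  W of the parameter space which is orthonormal for the induced metric.\<close>
definition mean_curv ::
  "('e \<Rightarrow> 'e \<Rightarrow> real) \<Rightarrow> ('a::euclidean_space \<Rightarrow> 'e::euclidean_space) \<Rightarrow> ('a \<Rightarrow> 'e) \<Rightarrow> 'a \<Rightarrow> real" where
  "mean_curv g F \<nu> u =
     (let W = (SOME W :: 'a \<Rightarrow> 'a. \<forall>b\<in>Basis. \<forall>b'\<in>Basis.
                 g (frechet_derivative F (at u) (W b)) (frechet_derivative F (at u) (W b'))
                   = (if b = b' then 1 else 0))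
      in - (\<Sum>b\<in>Basis. g (frechet_derivative \<nu> (at u) (W b)) (frechet_derivative F (at u) (W b))))"

definition cmc ::
  "('e \<Rightarrow> 'e \<Rightarrow> real) \<Rightarrow> 'e set \<Rightarrow> ('e \<Rightarrow> 'e set) \<Rightarrow> ('a::euclidean_space \<Rightarrow> 'e::euclidean_space)
   \<Rightarrow> 'a set \<Rightarrow> bool" where
  "cmc g A T F U \<longleftrightarrow>
     (\<exists>\<nu>. hypersurface g A T F \<nu> U \<and> (\<exists>c. \<forall>u\<in>U. mean_curv g F \<nu> u = c))"

definition diffeo_on :: "real set \<Rightarrow> (real \<Rightarrow> real) \<Rightarrow> bool" where
  "diffeo_on I \<phi> \<longleftrightarrow> inj_on \<phi> I \<and> open (\<phi> ` I) \<and>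
     (\<forall>s\<in>I. \<phi> differentiable (at s)) \<and>
     (\<forall>t\<in>\<phi> ` I. the_inv_into I \<phi> differentiable (at t))"

definition fphi_map ::
  "real \<Rightarrow> real \<Rightarrow> ('c1 \<Rightarrow> 'b1::euclidean_space \<times> real) \<Rightarrow> ('c1 \<Rightarrow> 'b1 \<times> real)
   \<Rightarrow> ('c2 \<Rightarrow> 'b2::euclidean_space \<times> real) \<Rightarrow> ('c2 \<Rightarrow> 'b2 \<times> real) \<Rightarrow> (real \<Rightarrow> real)
   \<Rightarrow> ('c1 \<times> 'c2) \<times> real \<Rightarrow> ('b1 \<times> real) \<times> ('b2 \<times> real)" where
  "fphi_map e1 e2 X1 \<eta>1 X2 \<eta>2 \<phi> x =
     (parallel e1 X1 \<eta>1 (snd x) (fst (fst x)), parallel e2 X2 \<eta>2 (\<phi> (snd x)) (snd (fst x)))"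

end

theory Submission
  imports Defs
begin

text \<open>The unit normal \<open>\<nu>\<close> of \<open>\<Sigma>\<close> is orthogonal to the tangent spaces of both slices, hence
  \<open>\<nu> = (\<alpha> N\<^sub>1, \<beta> N\<^sub>2)\<close>, where \<open>N\<^sub>1\<close>, \<open>N\<^sub>2\<close> are the unit normals of \<open>f\<^sup>1\<^sub>s\<close> and
  \<open>f\<^sup>2\<^sub>\<phi>\<^sub>(\<^sub>s\<^sub>)\<close>. Orthogonality to \<open>\<partial>\<^sub>s\<Phi> = (N\<^sub>1, \<phi>' N\<^sub>2)\<close> and \<open>|\<nu>| = 1\<close> give \<open>\<alpha> = -\<phi>' \<beta>\<close>
  and \<open>\<beta>\<^sup>2 = 1/(1 + \<phi>'\<^sup>2)\<close>; since \<open>\<beta>\<close> is continuous and nonvanishing on the connected set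
  \<open>U\<^sub>1 \<times> U\<^sub>2\<close>, \<open>\<alpha>\<close> and \<open>\<beta>\<close> depend on \<open>s\<close> only. The trace of the shape operator, taken in an
  orthonormal frame adapted to the product, is then
  \<open>H\<^sub>\<Sigma>(p\<^sub>1, p\<^sub>2, s) = \<alpha>(s) H\<^sub>1(p\<^sub>1) + \<beta>(s) H\<^sub>2(p\<^sub>2) - T(s)\<close>, with \<open>H\<^sub>i\<close> the mean curvatures of
  the parallel hypersurfaces and \<open>T\<close> depending on \<open>s\<close> only. As \<open>\<alpha>, \<beta> \<noteq> 0\<close> and the variables
  \<open>p\<^sub>1\<close>, \<open>p\<^sub>2\<close> separate, a constant \<open>H\<^sub>\<Sigma>\<close> forces \<open>H\<^sub>1\<close> and \<open>H\<^sub>2\<close> to be constant.\<close>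

section \<open>Bilinear forms\<close>

lemma qform_bilinear: "bilinear (qform e)"
  unfolding bilinear_def qform_def
  by (auto intro!: linearI simp: inner_add_left inner_add_right algebra_simps)

lemma qform_commute: "qform e p q = qform e q p"
  by (simp add: qform_def inner_commute mult.commute)

lemma bounded_bilinear_qform: "bounded_bilinear (qform e)"
  using bilinear_conv_bounded_bilinear qform_bilinear by blast

lemma linear_qform_left: "linear (\<lambda>x. qform e x y)"
  and linear_qform_right: "linear (\<lambda>y. qform e x y)"
  using qform_bilinear unfolding bilinear_def by blast+

lemma qform_add_left: "qform e (a + b) c = qform e a c + qform e b c"
  and qform_add_right: "qform e c (a + b) = qform e c a + qform e c b"
  and qform_scaleR_left: "qform e (r *\<^sub>R a) c = r * qform e a c"
  and qform_scaleR_right: "qform e c (r *\<^sub>R a) = r * qform e c a"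
  and qform_diff_left: "qform e (a - b) c = qform e a c - qform e b c"
  and qform_diff_right: "qform e c (a - b) = qform e c a - qform e c b"
  and qform_zero_left: "qform e 0 c = 0"
  and qform_zero_right: "qform e c 0 = 0"
  by (auto simp: qform_def inner_add_left inner_add_right inner_diff_left inner_diff_right
      algebra_simps)

lemma bilinear_qform_linear: "linear L \<Longrightarrow> bilinear (\<lambda>x y. qform e (L x) (L y))"
  unfolding bilinear_def
  using linear_compose[of L, OF _ linear_qform_left] linear_compose[of L, OF _ linear_qform_right]
  by (auto simp: o_def)

lemmas qform_simps = qform_add_left qform_add_right qform_scaleR_left qform_scaleR_right
  qform_diff_left qform_diff_right qform_zero_left qform_zero_right

lemma qform_lincomb: "qform e (a *\<^sub>R x + b *\<^sub>R y) (c *\<^sub>R z + d *\<^sub>R w) =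
    a * c * qform e x z + a * d * qform e x w + b * c * qform e y z + b * d * qform e y w"
  by (simp add: qform_simps algebra_simps)

text \<open>For \<open>e < 0\<close> the form is Lorentzian; positivity on the tangent spaces of the
  hyperboloid is the reversed Cauchy--Schwarz inequality for timelike \<open>p\<close>.\<close>

lemma qform_Qtangent_pos:
  fixes p v :: "'b::euclidean_space \<times> real"
  assumes p: "p \<in> Qspace e" and v: "v \<in> Qtangent e p" "v \<noteq> 0"
  shows "qform e v v > 0"
proof -
  obtain x t y r where xt: "p = (x, t)" and yr: "v = (y, r)" by (cases p, cases v)
  consider "e > 0" | "e = 0" | "e < 0" by linarith
  then show ?thesis
  proof cases
    case 1
    have "y \<noteq> 0 \<or> r \<noteq> 0" using v(2) yr by (auto simp: zero_prod_def)
    then have "y \<bullet> y + r * r > 0"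
      by (metis add_nonneg_pos add_pos_nonneg inner_gt_zero_iff inner_ge_zero
          not_real_square_gt_zero zero_le_square)
    then show ?thesis using 1 by (simp add: qform_def yr)
  next
    case 2
    then have "y \<noteq> 0" using v yr by (auto simp: Qtangent_def zero_prod_def)
    then show ?thesis using 2 v(1) yr by (simp add: qform_def Qtangent_def)
  next
    case 3
    have hp: "x \<bullet> x - t * t = 1 / e" "t > 0" using p 3 by (auto simp: Qspace_def qform_def xt)
    have hv: "x \<bullet> y = t * r" using v(1) 3 by (simp add: Qtangent_def qform_def xt yr)
    have "1 / e < 0" using 3 by simp
    then have xx: "x \<bullet> x < t * t" using hp by linarith
    have "y \<noteq> 0" using v(2) hv hp(2) yr by (auto simp: zero_prod_def)
    then have yy: "y \<bullet> y > 0" by simp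
    have "(t * r) ^ 2 \<le> (x \<bullet> x) * (y \<bullet> y)" using Cauchy_Schwarz_ineq[of x y] hv by simp
    also have "\<dots> < (t * t) * (y \<bullet> y)" using mult_strict_right_mono[OF xx yy] .
    finally have "(t * t) * (r * r) < (t * t) * (y \<bullet> y)" by (simp add: power2_eq_square algebra_simps)
    then have "r * r < y \<bullet> y" using hp(2) by (simp add: mult_less_cancel_left)
    then show ?thesis using 3 by (simp add: qform_def yr)
  qed
qed

lemma pform_bilinear: "bilinear (pform e1 e2)"
  unfolding bilinear_def
  by (intro conjI allI linearI) (simp_all add: pform_def qform_simps algebra_simps)

lemma pform_commute: "pform e1 e2 p q = pform e1 e2 q p"
  by (simp add: pform_def qform_commute)

lemma pform_Pair: "pform e1 e2 (a, b) (c, d) = qform e1 a c + qform e2 b d"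
  by (simp add: pform_def)

section \<open>Orthonormal frames and traces\<close>

definition orthonormal_on :: "('a \<Rightarrow> 'a \<Rightarrow> real) \<Rightarrow> 'a set \<Rightarrow> bool" where
  "orthonormal_on G T \<longleftrightarrow> (\<forall>x\<in>T. \<forall>y\<in>T. G x y = (if x = y then 1 else 0))"

definition orthonormal_frame :: "('a::euclidean_space \<Rightarrow> 'a \<Rightarrow> real) \<Rightarrow> ('a \<Rightarrow> 'a) \<Rightarrow> bool" where
  "orthonormal_frame G W \<longleftrightarrow> (\<forall>b\<in>Basis. \<forall>b'\<in>Basis. G (W b) (W b') = (if b = b' then 1 else 0))"

lemma orthonormal_on_independent:
  fixes G :: "'a::euclidean_space \<Rightarrow> 'a \<Rightarrow> real"
  assumes lin: "\<And>y. linear (\<lambda>x. G x y)" and on: "orthonormal_on G T" and fin: "finite T"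
  shows "independent T"
  unfolding independent_explicit
proof (intro conjI allI impI ballI)
  show "finite T" by fact
  fix c v assume s: "(\<Sum>v\<in>T. c v *\<^sub>R v) = 0" and v: "v \<in> T"
  have "0 = G (\<Sum>w\<in>T. c w *\<^sub>R w) v" using s by (simp add: linear_0[OF lin[of v]])
  also have "\<dots> = (\<Sum>w\<in>T. c w * G w v)"
    by (simp add: linear_sum[OF lin[of v]] linear_scale[OF lin[of v]])
  also have "\<dots> = (\<Sum>w\<in>T. if w = v then c w else 0)"
    using on v unfolding orthonormal_on_def by (intro sum.cong) auto
  also have "\<dots> = c v" using v fin by simp
  finally show "c v = 0" by simp
qed

context
  fixes G :: "'a::euclidean_space \<Rightarrow> 'a \<Rightarrow> real"
  assumes bil: "bilinear G"
begin

lemma bilinear_linear_left: "linear (\<lambda>x. G x y)" and bilinear_linear_right: "linear (\<lambda>y. G x y)"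
  using bil unfolding bilinear_def by auto

lemma orthonormal_on_extend:
  assumes sym: "\<And>x y. G x y = G y x" and pos: "\<And>x. x \<noteq> 0 \<Longrightarrow> G x x > 0"
    and T: "finite T" "orthonormal_on G T" "card T < DIM('a)"
  shows "\<exists>z. z \<notin> T \<and> orthonormal_on G (insert z T)"
proof -
  have "dim T = card T"
    using dim_eq_card_independent[OF orthonormal_on_independent[OF bilinear_linear_left T(2,1)]] .
  then have "span T \<noteq> UNIV" using T(3) dim_eq_full[of T] by auto
  then obtain x where x: "x \<notin> span T" by auto
  define y where "y = x - (\<Sum>t\<in>T. G x t *\<^sub>R t)"
  have "(\<Sum>t\<in>T. G x t *\<^sub>R t) \<in> span T" by (intro span_sum span_scale span_base)
  then have "y \<noteq> 0" using x unfolding y_def by auto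
  then have ypos: "G y y > 0" using pos by blast
  have yt: "G y t0 = 0" if t0: "t0 \<in> T" for t0
  proof -
    have "G y t0 = G x t0 - (\<Sum>t\<in>T. G x t * G t t0)"
      unfolding y_def by (simp add: linear_diff[OF bilinear_linear_left] linear_sum[OF bilinear_linear_left]
          linear_scale[OF bilinear_linear_left])
    also have "(\<Sum>t\<in>T. G x t * G t t0) = (\<Sum>t\<in>T. if t = t0 then G x t else 0)"
      using T(2) t0 unfolding orthonormal_on_def by (intro sum.cong) auto
    finally show ?thesis using t0 T(1) by simp
  qed
  define z where "z = (1 / sqrt (G y y)) *\<^sub>R y"
  have zz: "G z z = 1"
    unfolding z_def using ypos
    by (simp add: linear_scale[OF bilinear_linear_left] linear_scale[OF bilinear_linear_right]
        power2_eq_square[symmetric])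
  have zt: "G z t = 0" "G t z = 0" if "t \<in> T" for t
    unfolding z_def using yt[OF that] sym
    by (auto simp: linear_scale[OF bilinear_linear_left] linear_scale[OF bilinear_linear_right])
  have "z \<notin> T" using zz zt by force
  moreover have "orthonormal_on G (insert z T)"
    using T(2) zz zt \<open>z \<notin> T\<close> unfolding orthonormal_on_def by auto
  ultimately show ?thesis by blast
qed

lemma orthonormal_frame_exists:
  assumes sym: "\<And>x y. G x y = G y x" and pos: "\<And>x. x \<noteq> 0 \<Longrightarrow> G x x > 0"
  shows "\<exists>W. orthonormal_frame G W"
proof -
  have "\<exists>T. finite T \<and> card T = k \<and> orthonormal_on G T" if "k \<le> DIM('a)" for k
    using that
  proof (induction k)
    case 0
    show ?case by (intro exI[of _ "{}"]) (simp add: orthonormal_on_def)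
  next
    case (Suc k)
    then obtain T where T: "finite T" "card T = k" "orthonormal_on G T" by auto
    moreover have "card T < DIM('a)" using T(2) Suc.prems by simp
    ultimately obtain z where "z \<notin> T" "orthonormal_on G (insert z T)"
      using orthonormal_on_extend[OF sym pos] by blast
    then show ?case using T by (intro exI[of _ "insert z T"]) auto
  qed
  then obtain T where T: "finite T" "card T = DIM('a)" "orthonormal_on G T" by blast
  then obtain h where h: "bij_betw h (Basis :: 'a set) T"
    using finite_same_card_bij[of "Basis :: 'a set" T] by force
  have "orthonormal_frame G h"
    unfolding orthonormal_frame_def
  proof (intro ballI)
    fix b b' :: 'a assume b: "b \<in> Basis" "b' \<in> Basis"
    then have "h b \<in> T" "h b' \<in> T" "h b = h b' \<longleftrightarrow> b = b'"
      using h by (auto simp: bij_betw_def inj_on_def)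
    then show "G (h b) (h b') = (if b = b' then 1 else 0)"
      using T(3) unfolding orthonormal_on_def by auto
  qed
  then show ?thesis by blast
qed

lemma orthonormal_frame_expansion:
  assumes W: "orthonormal_frame G W"
  shows "x = (\<Sum>c\<in>Basis. G x (W c) *\<^sub>R W c)"
proof -
  have W': "G (W b) (W b') = (if b = b' then 1 else 0)" if "b \<in> Basis" "b' \<in> Basis" for b b'
    using W that unfolding orthonormal_frame_def by blast
  have inj: "inj_on W Basis"
    by (rule inj_onI) (metis W' zero_neq_one)
  have "orthonormal_on G (W ` Basis)"
    using W' inj unfolding orthonormal_on_def inj_on_def by auto
  then have ind: "independent (W ` Basis)"
    by (rule orthonormal_on_independent[of G, OF bilinear_linear_left]) simp
  have "card (W ` Basis) = DIM('a)" using card_image[OF inj] by simp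
  then have "UNIV \<subseteq> span (W ` Basis)"
    using card_ge_dim_independent[OF subset_UNIV ind] by simp
  then obtain u where "x = (\<Sum>v\<in>W ` Basis. u v *\<^sub>R v)"
    using span_finite[of "W ` Basis"] by auto
  then have u: "x = (\<Sum>c\<in>Basis. u (W c) *\<^sub>R W c)"
    using sum.reindex[OF inj, of "\<lambda>v. u v *\<^sub>R v"] by simp
  have "G x (W d) = u (W d)" if d: "d \<in> Basis" for d
  proof -
    have "G x (W d) = (\<Sum>c\<in>Basis. u (W c) * G (W c) (W d))"
      by (subst u) (simp add: linear_sum[OF bilinear_linear_left] linear_scale[OF bilinear_linear_left])
    also have "\<dots> = (\<Sum>c\<in>Basis. if c = d then u (W c) else 0)"
      using W' d by (intro sum.cong) auto
    finally show ?thesis using d by simp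
  qed
  then show ?thesis using u by (metis (no_types, lifting) sum.cong)
qed

text \<open>Change of frame: \<open>\<Sum>\<^sub>b B(W' b, W' b) = \<Sum>\<^sub>c\<^sub>d (\<Sum>\<^sub>b G(W' b, W c) G(W' b, W d)) B(W c, W d)\<close>,
  and the inner sum is \<open>G(W c, W d)\<close> by the expansion of \<open>W d\<close> in the frame \<open>W'\<close>.\<close>

lemma orthonormal_frame_trace_eq:
  fixes B :: "'a \<Rightarrow> 'a \<Rightarrow> real"
  assumes sym: "\<And>x y. G x y = G y x" and bB: "bilinear B"
    and W: "orthonormal_frame G W" and W': "orthonormal_frame G W'"
  shows "(\<Sum>b\<in>Basis. B (W b) (W b)) = (\<Sum>b\<in>Basis. B (W' b) (W' b))"
proof -
  have Bl: "\<And>y. linear (\<lambda>x. B x y)" and Br: "\<And>x. linear (\<lambda>y. B x y)"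
    using bB unfolding bilinear_def by auto
  have expand: "B x x = (\<Sum>c\<in>Basis. \<Sum>d\<in>Basis. G x (W c) * G x (W d) * B (W c) (W d))" for x
  proof -
    have "B x x = B (\<Sum>c\<in>Basis. G x (W c) *\<^sub>R W c) (\<Sum>d\<in>Basis. G x (W d) *\<^sub>R W d)"
      using orthonormal_frame_expansion[OF W, of x] by simp
    also have "\<dots> = (\<Sum>c\<in>Basis. G x (W c) * B (W c) (\<Sum>d\<in>Basis. G x (W d) *\<^sub>R W d))"
      by (simp add: linear_sum[OF Bl] linear_scale[OF Bl])
    finally show ?thesis
      by (simp add: linear_sum[OF Br] linear_scale[OF Br] sum_distrib_left mult.assoc)
  qed
  have gram: "(\<Sum>b\<in>Basis. G (W' b) (W c) * G (W' b) (W d)) = (if c = d then 1 else 0)"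
    if "c \<in> Basis" "d \<in> Basis" for c d
  proof -
    have "(\<Sum>b\<in>Basis. G (W' b) (W c) * G (W' b) (W d))
        = G (W c) (\<Sum>b\<in>Basis. G (W d) (W' b) *\<^sub>R W' b)"
      using sym by (simp add: linear_sum[OF bilinear_linear_right] linear_scale[OF bilinear_linear_right] mult.commute)
    also have "\<dots> = G (W c) (W d)" using orthonormal_frame_expansion[OF W', of "W d"] by simp
    finally show ?thesis using W that unfolding orthonormal_frame_def by simp
  qed
  have "(\<Sum>b\<in>Basis. B (W' b) (W' b))
      = (\<Sum>c\<in>Basis. \<Sum>d\<in>Basis. \<Sum>b\<in>Basis. G (W' b) (W c) * G (W' b) (W d) * B (W c) (W d))"
    unfolding expand by (subst sum.swap, rule sum.cong[OF refl], rule sum.swap)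
  also have "\<dots> = (\<Sum>c\<in>Basis. \<Sum>d\<in>Basis.
      (\<Sum>b\<in>Basis. G (W' b) (W c) * G (W' b) (W d)) * B (W c) (W d))"
    by (simp only: sum_distrib_right)
  also have "\<dots> = (\<Sum>c\<in>Basis. \<Sum>d\<in>Basis. (if c = d then B (W c) (W d) else 0))"
    using gram by (intro sum.cong refl) auto
  finally show ?thesis by simp
qed

end

text \<open>\<^const>\<open>mean_curv\<close> picks its frame by \<open>SOME\<close>; by the previous lemma any orthonormal frame
  gives the same value.\<close>

lemma mean_curv_orthonormal_frame:
  fixes F \<nu> :: "'a::euclidean_space \<Rightarrow> 'e::euclidean_space"
  assumes bil: "bilinear g" and sym: "\<And>x y. g x y = g y x"
    and lF: "linear (frechet_derivative F (at u))" and l\<nu>: "linear (frechet_derivative \<nu> (at u))"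
    and W: "orthonormal_frame (\<lambda>x y. g (frechet_derivative F (at u) x) (frechet_derivative F (at u) y)) W"
  shows "mean_curv g F \<nu> u =
    - (\<Sum>b\<in>Basis. g (frechet_derivative \<nu> (at u) (W b)) (frechet_derivative F (at u) (W b)))"
proof -
  let ?dF = "frechet_derivative F (at u)" and ?d\<nu> = "frechet_derivative \<nu> (at u)"
  let ?G = "\<lambda>x y. g (?dF x) (?dF y)"
  define W0 where "W0 = (SOME W. orthonormal_frame ?G W)"
  have W0: "orthonormal_frame ?G W0"
    unfolding W0_def by (rule someI[where x = W]) (rule W)
  note gl = bilinear_linear_left[OF bil] bilinear_linear_right[OF bil]
  have bG: "bilinear ?G" and bB: "bilinear (\<lambda>x y. g (?d\<nu> x) (?dF y))"
    unfolding bilinear_def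
    using linear_compose[OF lF gl(1)] linear_compose[OF lF gl(2)] linear_compose[OF l\<nu> gl(1)]
    by (auto simp: o_def)
  have "(\<Sum>b\<in>Basis. g (?d\<nu> (W0 b)) (?dF (W0 b))) = (\<Sum>b\<in>Basis. g (?d\<nu> (W b)) (?dF (W b)))"
    by (rule orthonormal_frame_trace_eq[OF bG _ bB W0 W]) (rule sym)
  then show ?thesis
    unfolding mean_curv_def W0_def orthonormal_frame_def Let_def by simp
qed

lemma sum_Basis_prod:
  fixes f :: "'a::euclidean_space \<times> 'b::euclidean_space \<Rightarrow> 'c::comm_monoid_add"
  shows "sum f Basis = sum (\<lambda>i. f (i, 0)) Basis + sum (\<lambda>i. f (0, i)) Basis"
proof -
  have "inj_on (\<lambda>u. (u::'a, 0::'b)) Basis" "inj_on (\<lambda>u. (0::'a, u::'b)) Basis"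
    by (auto intro!: inj_onI Pair_inject)
  then show ?thesis
    unfolding Basis_prod_def by (subst sum.union_disjoint) (auto simp: Basis_prod_def sum.reindex)
qed

lemma Basis_prod_prod_real_iff:
  "z \<in> (Basis :: (('a::euclidean_space \<times> 'b::euclidean_space) \<times> real) set) \<longleftrightarrow>
   (\<exists>b\<in>Basis. z = ((b, 0), 0)) \<or> (\<exists>b\<in>Basis. z = ((0, b), 0)) \<or> z = ((0, 0), 1)"
  by (auto simp: Basis_prod_def Basis_real_def zero_prod_def)

text \<open>Orthonormal frames for a metric \<open>G\<^sub>1 + G\<^sub>2 + c dt\<^sup>2\<close> on \<open>('a \<times> 'b) \<times> real\<close>, with
  \<open>r = 1/\<surd>c\<close>. The tests against \<^const>\<open>Basis\<close> keep the other factor's component zero, as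
  \<open>W\<^sub>1 0\<close>, \<open>W\<^sub>2 0\<close> are arbitrary.\<close>

definition product_frame ::
  "('a::euclidean_space \<Rightarrow> 'a) \<Rightarrow> ('b::euclidean_space \<Rightarrow> 'b) \<Rightarrow> real \<Rightarrow> ('a \<times> 'b) \<times> real \<Rightarrow> ('a \<times> 'b) \<times> real"
  where
  "product_frame W1 W2 r z =
     ((if fst (fst z) \<in> Basis then W1 (fst (fst z)) else 0,
       if snd (fst z) \<in> Basis then W2 (snd (fst z)) else 0), r * snd z)"

lemma orthonormal_frame_product:
  fixes G1 :: "'a::euclidean_space \<Rightarrow> 'a \<Rightarrow> real" and G2 :: "'b::euclidean_space \<Rightarrow> 'b \<Rightarrow> real"
  assumes G: "\<And>v1 v2 h w1 w2 k. G ((v1, v2), h) ((w1, w2), k) = G1 v1 w1 + G2 v2 w2 + h * k * c"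
    and G1: "bilinear G1" and G2: "bilinear G2"
    and W1: "orthonormal_frame G1 W1" and W2: "orthonormal_frame G2 W2" and r: "r * r * c = 1"
  shows "orthonormal_frame G (product_frame W1 W2 r)"
proof -
  have "G1 (if i \<in> Basis then W1 i else 0) (if j \<in> Basis then W1 j else 0) =
      (if i \<in> Basis \<and> i = j then 1 else 0)"
    "G2 (if i' \<in> Basis then W2 i' else 0) (if j' \<in> Basis then W2 j' else 0) =
      (if i' \<in> Basis \<and> i' = j' then 1 else 0)" for i j i' j'
    using W1 W2 linear_0[OF bilinear_linear_left[OF G1]] linear_0[OF bilinear_linear_right[OF G1]]
      linear_0[OF bilinear_linear_left[OF G2]] linear_0[OF bilinear_linear_right[OF G2]]
    unfolding orthonormal_frame_def by auto
  then have eq: "G (product_frame W1 W2 r z) (product_frame W1 W2 r z') =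
      (if fst (fst z) \<in> Basis \<and> fst (fst z) = fst (fst z') then 1 else 0)
      + (if snd (fst z) \<in> Basis \<and> snd (fst z) = snd (fst z') then 1 else 0)
      + snd z * snd z'" for z z'
    using r unfolding product_frame_def G by (simp add: algebra_simps)
  show ?thesis
    unfolding orthonormal_frame_def
  proof (intro ballI)
    fix z z' :: "('a \<times> 'b) \<times> real" assume "z \<in> Basis" "z' \<in> Basis"
    then show "G (product_frame W1 W2 r z) (product_frame W1 W2 r z') = (if z = z' then 1 else 0)"
      unfolding Basis_prod_prod_real_iff eq by (auto simp: nonzero_Basis)
  qed
qed

section \<open>Calculus\<close>

lemma frechet_derivative_along:
  assumes "F differentiable (at (g x))" "(g has_derivative L) (at x)"
    "((\<lambda>y. F (g y)) has_derivative D) (at x)"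
  shows "frechet_derivative F (at (g x)) (L w) = D w"
proof -
  have "(F has_derivative frechet_derivative F (at (g x))) (at (g x))"
    using assms(1) frechet_derivative_works by blast
  from diff_chain_at[OF assms(2) this]
  have "((F \<circ> g) has_derivative (frechet_derivative F (at (g x)) \<circ> L)) (at x)" .
  from has_derivative_unique[OF this[unfolded o_def] assms(3)] show ?thesis by (metis comp_apply)
qed

lemma has_derivative_bilinear_const:
  assumes Q: "bounded_bilinear Q" and U: "open U" "u \<in> U"
    and F: "(F has_derivative F') (at u)" and H: "(H has_derivative H') (at u)"
    and c: "\<And>v. v \<in> U \<Longrightarrow> Q (F v) (H v) = c"
  shows "Q (F' w) (H u) + Q (F u) (H' w) = 0"
proof -
  have "((\<lambda>x. Q (F x) (H x)) has_derivative (\<lambda>h. 0)) (at u)"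
    by (rule has_derivative_transform_within_open[OF _ U, of "\<lambda>_. c"]) (simp_all add: c)
  from has_derivative_unique[OF bounded_bilinear.FDERIV[OF Q F H] this] show ?thesis
    by (metis add.commute)
qed

lemma C1_on_has_derivative:
  "C1_on U F \<Longrightarrow> u \<in> U \<Longrightarrow> (F has_derivative frechet_derivative F (at u)) (at u)"
  unfolding C1_on_def using frechet_derivative_works by blast

lemma C1_on_continuous_on: "C1_on U F \<Longrightarrow> continuous_on U F"
  unfolding C1_on_def
  by (meson continuous_at_imp_continuous_on differentiable_imp_continuous_within)

lemma
  fixes X Y :: "'a::euclidean_space \<Rightarrow> 'b::real_normed_vector"
  assumes X: "C1_on U X" and Y: "C1_on U Y"
  shows frechet_derivative_lincomb: "u \<in> U \<Longrightarrow>
      frechet_derivative (\<lambda>u. a *\<^sub>R X u + b *\<^sub>R Y u) (at u) =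
      (\<lambda>w. a *\<^sub>R frechet_derivative X (at u) w + b *\<^sub>R frechet_derivative Y (at u) w)"
    and C1_on_lincomb: "C1_on U (\<lambda>u. a *\<^sub>R X u + b *\<^sub>R Y u)"
proof -
  have D: "((\<lambda>u. a *\<^sub>R X u + b *\<^sub>R Y u) has_derivative
      (\<lambda>w. a *\<^sub>R frechet_derivative X (at u) w + b *\<^sub>R frechet_derivative Y (at u) w)) (at u)"
    if "u \<in> U" for u
    using C1_on_has_derivative[OF X that] C1_on_has_derivative[OF Y that]
    by (auto intro!: derivative_eq_intros)
  then show fd: "u \<in> U \<Longrightarrow> frechet_derivative (\<lambda>u. a *\<^sub>R X u + b *\<^sub>R Y u) (at u) =
      (\<lambda>w. a *\<^sub>R frechet_derivative X (at u) w + b *\<^sub>R frechet_derivative Y (at u) w)" for u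
    using frechet_derivative_at[OF D] by simp
  show "C1_on U (\<lambda>u. a *\<^sub>R X u + b *\<^sub>R Y u)"
    unfolding C1_on_def
  proof (intro conjI ballI)
    show "(\<lambda>u. a *\<^sub>R X u + b *\<^sub>R Y u) differentiable at u" if "u \<in> U" for u
      using D[OF that] differentiable_def by blast
    fix c :: 'a assume c: "c \<in> Basis"
    have "continuous_on U (\<lambda>u. a *\<^sub>R frechet_derivative X (at u) c + b *\<^sub>R frechet_derivative Y (at u) c)"
      using X Y c unfolding C1_on_def by (intro continuous_intros) auto
    then show "continuous_on U (\<lambda>u. frechet_derivative (\<lambda>u. a *\<^sub>R X u + b *\<^sub>R Y u) (at u) c)"
      by (rule continuous_on_cong[THEN iffD1, rotated 2]) (auto simp: fd)
  qed
qed

section \<open>Generalized trigonometric functions\<close>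

definition dcs :: "real \<Rightarrow> real \<Rightarrow> real" where
  "dcs eps s = (if eps > 0 then - sqrt eps * sin (sqrt eps * s)
               else if eps < 0 then sqrt (- eps) * sinh (sqrt (- eps) * s) else 0)"

definition dsn :: "real \<Rightarrow> real \<Rightarrow> real" where
  "dsn eps s = (if eps > 0 then cos (sqrt eps * s)
               else if eps < 0 then cosh (sqrt (- eps) * s) else 1)"

lemma cs_sn_cases:
  obtains (neg) r where "r > 0" "e = - (r * r)"
      "cs e = (\<lambda>s. cosh (r * s))" "sn e = (\<lambda>s. sinh (r * s) / r)"
      "dcs e = (\<lambda>s. r * sinh (r * s))" "dsn e = (\<lambda>s. cosh (r * s))"
  | (zero) "e = 0" "cs e = (\<lambda>s. 1)" "sn e = (\<lambda>s. s)" "dcs e = (\<lambda>s. 0)" "dsn e = (\<lambda>s. 1)"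
  | (pos) r where "r > 0" "e = r * r"
      "cs e = (\<lambda>s. cos (r * s))" "sn e = (\<lambda>s. sin (r * s) / r)"
      "dcs e = (\<lambda>s. - r * sin (r * s))" "dsn e = (\<lambda>s. cos (r * s))"
proof (cases e "0::real" rule: linorder_cases)
  case less
  then show ?thesis
    by (intro neg[of "sqrt (- e)"]) (auto simp: cs_def sn_def dcs_def dsn_def fun_eq_iff)
next
  case equal
  then show ?thesis by (intro zero) (auto simp: cs_def sn_def dcs_def dsn_def fun_eq_iff)
next
  case greater
  then show ?thesis
    by (intro pos[of "sqrt e"]) (auto simp: cs_def sn_def dcs_def dsn_def fun_eq_iff)
qed

lemma DERIV_cs: "(cs e has_real_derivative dcs e s) (at s)"
  by (cases e rule: cs_sn_cases) (auto intro!: derivative_eq_intros)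

lemma DERIV_sn: "(sn e has_real_derivative dsn e s) (at s)"
  by (cases e rule: cs_sn_cases) (auto intro!: derivative_eq_intros)

lemma DERIV_dcs: "(dcs e has_real_derivative - e * cs e s) (at s)"
  by (cases e rule: cs_sn_cases) (auto intro!: derivative_eq_intros)

lemma DERIV_dsn: "(dsn e has_real_derivative - e * sn e s) (at s)"
  by (cases e rule: cs_sn_cases) (auto intro!: derivative_eq_intros)

lemma dcs_dsn_pythagoras: "e \<noteq> 0 \<Longrightarrow> dcs e s * dcs e s / e + dsn e s * dsn e s = 1"
  by (cases e rule: cs_sn_cases)
    (auto simp: field_simps cosh_square_eq sin_squared_eq power2_eq_square[symmetric])

lemma dcs_zero [simp]: "dcs 0 s = 0" and dsn_zero [simp]: "dsn 0 s = 1"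
  by (simp_all add: dcs_def dsn_def)

section \<open>Tangent spaces of a space form\<close>

lemma subspace_Qtangent: "subspace (Qtangent e p)"
  unfolding Qtangent_def subspace_def by (auto simp: qform_simps)

lemma dim_Qtangent_le:
  fixes p :: "'b::euclidean_space \<times> real"
  assumes p: "p \<in> Qspace e"
  shows "dim (Qtangent e p) \<le> DIM('b)"
proof -
  obtain z where z: "z \<notin> Qtangent e p"
  proof (cases "e = 0")
    case True
    then show ?thesis using that[of "(0, 1)"] by (simp add: Qtangent_def)
  next
    case False
    have "qform e p p = 1 / e" using p False by (cases "e > 0") (auto simp: Qspace_def)
    then show ?thesis using that[of p] False by (simp add: Qtangent_def)
  qed
  then have "span (Qtangent e p) \<noteq> UNIV"
    using span_eq_iff[THEN iffD2, OF subspace_Qtangent] by (metis UNIV_I)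
  then have "dim (Qtangent e p) \<noteq> DIM('b \<times> real)" using dim_eq_full by blast
  then show ?thesis using dim_subset_UNIV[of "Qtangent e p"] by simp
qed

text \<open>The normal line: a tangent vector orthogonal to the image of an immersion of codimension
  one is a multiple of the unit normal \<open>N\<close>, because \<open>N\<close> and the image span the tangent space.\<close>

lemma Qtangent_orthogonal_image_eq:
  fixes L :: "'c::euclidean_space \<Rightarrow> 'b::euclidean_space \<times> real"
  assumes dim: "DIM('c) + 1 = DIM('b)" and p: "p \<in> Qspace e" and lin: "linear L" and inj: "inj L"
    and L: "\<And>w. L w \<in> Qtangent e p" and N: "N \<in> Qtangent e p" "qform e N N = 1"
    "\<And>w. qform e N (L w) = 0"
    and v: "v \<in> Qtangent e p" "\<And>w. qform e v (L w) = 0"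
  shows "v = qform e v N *\<^sub>R N"
proof -
  have indL: "independent (L ` Basis)"
    using linear_independent_injective_image[OF lin independent_Basis inj_on_subset[OF inj subset_UNIV]] .
  have NL: "N \<notin> span (L ` Basis)"
  proof
    assume "N \<in> span (L ` Basis)"
    then have "qform e N N = 0"
      by (rule linear_eq_0_on_span[OF linear_qform_right, rotated]) (auto simp: N(3))
    then show False using N(2) by simp
  qed
  define T where "T = insert N (L ` Basis)"
  have indT: "independent T" unfolding T_def by (rule independent_insertI[OF NL indL])
  have "card (L ` Basis) = DIM('c)" using card_image[OF inj_on_subset[OF inj subset_UNIV]] by simp
  moreover have "N \<notin> L ` Basis" using NL span_base by metis
  ultimately have "card T = DIM('b)" unfolding T_def using dim by simp
  moreover have "T \<subseteq> Qtangent e p" unfolding T_def using N L by auto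
  ultimately have span: "Qtangent e p \<subseteq> span T"
    using card_ge_dim_independent[of T "Qtangent e p", OF _ indT] dim_Qtangent_le[OF p] by simp
  define v' where "v' = v - qform e v N *\<^sub>R N"
  have v'Q: "v' \<in> Qtangent e p"
    unfolding v'_def
    using subspace_diff[OF subspace_Qtangent v(1) subspace_scale[OF subspace_Qtangent N(1)]] .
  have "qform e v' t = 0" if "t \<in> T" for t
    using that unfolding T_def v'_def by (auto simp: qform_simps N v)
  then have "qform e v' v' = 0"
    using linear_eq_0_on_span[OF linear_qform_right[of e v'], of T v'] span v'Q by blast
  then have "v' = 0" using qform_Qtangent_pos[OF p v'Q] by (metis less_irrefl)
  then show ?thesis unfolding v'_def by simp
qed

lemma immersion_orthonormal_frame_exists:
  fixes L :: "'c::euclidean_space \<Rightarrow> 'b::euclidean_space \<times> real"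
  assumes p: "p \<in> Qspace e" and lin: "linear L" and inj: "inj L" and L: "\<And>w. L w \<in> Qtangent e p"
  shows "\<exists>W. orthonormal_frame (\<lambda>x y. qform e (L x) (L y)) W"
proof (rule orthonormal_frame_exists)
  show "bilinear (\<lambda>x y. qform e (L x) (L y))" using lin by (rule bilinear_qform_linear)
  show "qform e (L x) (L y) = qform e (L y) (L x)" for x y by (rule qform_commute)
  show "0 < qform e (L x) (L x)" if "x \<noteq> 0" for x
  proof -
    have "L x \<noteq> 0" using that inj linear_0[OF lin] by (metis injD)
    then show ?thesis using qform_Qtangent_pos[OF p L] by blast
  qed
qed

section \<open>Parallel hypersurfaces\<close>

text \<open>The unit normal of the parallel hypersurface \<^term>\<open>parallel e X \<eta> s\<close>, i.e.\ the velocity of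
  the geodesic \<open>s \<mapsto> exp\<^sub>p(s \<eta>\<^sub>p)\<close>.\<close>

definition parallel_normal ::
  "real \<Rightarrow> ('c \<Rightarrow> 'b::euclidean_space \<times> real) \<Rightarrow> ('c \<Rightarrow> 'b \<times> real) \<Rightarrow> real \<Rightarrow> 'c \<Rightarrow> 'b \<times> real" where
  "parallel_normal e X \<eta> s u = dcs e s *\<^sub>R X u + dsn e s *\<^sub>R \<eta> u"

lemma parallel_has_vector_derivative:
  "((\<lambda>s. parallel e X \<eta> s u) has_vector_derivative parallel_normal e X \<eta> s u) (at s)"
proof -
  have "((\<lambda>s. cs e s *\<^sub>R X u + sn e s *\<^sub>R \<eta> u) has_vector_derivative
      (cs e s *\<^sub>R 0 + dcs e s *\<^sub>R X u) + (sn e s *\<^sub>R 0 + dsn e s *\<^sub>R \<eta> u)) (at s)"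
    by (intro has_vector_derivative_add has_vector_derivative_scaleR DERIV_cs DERIV_sn
        has_vector_derivative_const)
  then show ?thesis by (simp add: parallel_def parallel_normal_def)
qed

lemma parallel_normal_has_vector_derivative:
  "((\<lambda>s. parallel_normal e X \<eta> s u) has_vector_derivative (- e) *\<^sub>R parallel e X \<eta> s u) (at s)"
proof -
  have "((\<lambda>s. dcs e s *\<^sub>R X u + dsn e s *\<^sub>R \<eta> u) has_vector_derivative
      (dcs e s *\<^sub>R 0 + (- e * cs e s) *\<^sub>R X u) + (dsn e s *\<^sub>R 0 + (- e * sn e s) *\<^sub>R \<eta> u)) (at s)"
    by (intro has_vector_derivative_add has_vector_derivative_scaleR DERIV_dcs DERIV_dsn
        has_vector_derivative_const)
  then show ?thesis by (simp add: parallel_def parallel_normal_def scaleR_add_right)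
qed

locale space_form_hypersurface =
  fixes e :: real and X \<eta> :: "'c::euclidean_space \<Rightarrow> 'b::euclidean_space \<times> real" and U :: "'c set"
  assumes hypersurface: "hypersurface (qform e) (Qspace e) (Qtangent e) X \<eta> U"
begin

abbreviation "f \<equiv> parallel e X \<eta>"
abbreviation "N \<equiv> parallel_normal e X \<eta>"

lemma open_U: "open U" and connected_U: "connected U" and U_nonempty: "U \<noteq> {}"
  and C1_X: "C1_on U X" and C1_\<eta>: "C1_on U \<eta>"
  using hypersurface unfolding hypersurface_def by auto

lemma X_Qspace: "u \<in> U \<Longrightarrow> X u \<in> Qspace e"
  and \<eta>_Qtangent: "u \<in> U \<Longrightarrow> \<eta> u \<in> Qtangent e (X u)"
  and \<eta>_unit: "u \<in> U \<Longrightarrow> qform e (\<eta> u) (\<eta> u) = 1"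
  and \<eta>_orthogonal: "u \<in> U \<Longrightarrow> qform e (\<eta> u) (frechet_derivative X (at u) w) = 0"
  and dX_Qtangent: "u \<in> U \<Longrightarrow> frechet_derivative X (at u) w \<in> Qtangent e (X u)"
  using hypersurface unfolding hypersurface_def by auto

lemma qform_X_X: "e \<noteq> 0 \<Longrightarrow> u \<in> U \<Longrightarrow> qform e (X u) (X u) = 1 / e"
  using X_Qspace by (cases "e > 0") (auto simp: Qspace_def)

lemma qform_X_\<eta>: "e \<noteq> 0 \<Longrightarrow> u \<in> U \<Longrightarrow> qform e (X u) (\<eta> u) = 0"
  using \<eta>_Qtangent by (auto simp: Qtangent_def)

lemma qform_X_dX: "e \<noteq> 0 \<Longrightarrow> u \<in> U \<Longrightarrow> qform e (X u) (frechet_derivative X (at u) w) = 0"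
  using dX_Qtangent by (auto simp: Qtangent_def)

text \<open>The next two identities differentiate \<open>\<langle>\<eta>, \<eta>\<rangle> = 1\<close> and \<open>\<langle>X, \<eta>\<rangle> = 0\<close>.\<close>

lemma qform_\<eta>_d\<eta>: "u \<in> U \<Longrightarrow> qform e (\<eta> u) (frechet_derivative \<eta> (at u) w) = 0"
  using has_derivative_bilinear_const[OF bounded_bilinear_qform open_U _
      C1_on_has_derivative[OF C1_\<eta>] C1_on_has_derivative[OF C1_\<eta>] \<eta>_unit, of u w]
  by (simp add: qform_commute[of e "frechet_derivative \<eta> (at u) w"])

lemma qform_X_d\<eta>: "e \<noteq> 0 \<Longrightarrow> u \<in> U \<Longrightarrow> qform e (X u) (frechet_derivative \<eta> (at u) w) = 0"
  using has_derivative_bilinear_const[OF bounded_bilinear_qform open_U _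
      C1_on_has_derivative[OF C1_X] C1_on_has_derivative[OF C1_\<eta>] qform_X_\<eta>, of u w]
    \<eta>_orthogonal[of u w]
  by (simp add: qform_commute[of e "frechet_derivative X (at u) w"])

lemma C1_parallel: "C1_on U (f s)"
  and frechet_derivative_parallel: "u \<in> U \<Longrightarrow> frechet_derivative (f s) (at u) =
    (\<lambda>w. cs e s *\<^sub>R frechet_derivative X (at u) w + sn e s *\<^sub>R frechet_derivative \<eta> (at u) w)"
  using C1_on_lincomb[OF C1_X C1_\<eta>] frechet_derivative_lincomb[OF C1_X C1_\<eta>]
  by (simp_all add: parallel_def[abs_def])

lemma C1_parallel_normal: "C1_on U (N s)"
  using C1_on_lincomb[OF C1_X C1_\<eta>] by (simp add: parallel_normal_def[abs_def])

lemma linear_dN: "u \<in> U \<Longrightarrow> linear (frechet_derivative (N s) (at u))"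
  using C1_on_has_derivative[OF C1_parallel_normal] has_derivative_linear by blast

lemma parallel_normal_unit: "u \<in> U \<Longrightarrow> qform e (N s u) (N s u) = 1"
  unfolding parallel_normal_def qform_lincomb
  using qform_X_X qform_X_\<eta> \<eta>_unit dcs_dsn_pythagoras[of e s] qform_commute[of e "\<eta> u" "X u"]
  by (cases "e = 0") auto

lemma parallel_normal_orthogonal:
  "u \<in> U \<Longrightarrow> qform e (N s u) (frechet_derivative (f s) (at u) w) = 0"
  unfolding parallel_normal_def frechet_derivative_parallel qform_lincomb
  using \<eta>_orthogonal qform_\<eta>_d\<eta> qform_X_dX qform_X_d\<eta> by (cases "e = 0") auto

text \<open>Whether \<open>f\<^sub>s\<close> is an immersion into the space form is not automatic (focal points);
  granted this, \<open>N\<^sub>s\<close> is a unit normal along it.\<close>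

lemma parallel_hypersurface:
  assumes "\<And>u. u \<in> U \<Longrightarrow> f s u \<in> Qspace e" "\<And>u. u \<in> U \<Longrightarrow> inj (frechet_derivative (f s) (at u))"
    "\<And>u w. u \<in> U \<Longrightarrow> frechet_derivative (f s) (at u) w \<in> Qtangent e (f s u)"
    "\<And>u. u \<in> U \<Longrightarrow> N s u \<in> Qtangent e (f s u)"
  shows "hypersurface (qform e) (Qspace e) (Qtangent e) (f s) (N s) U"
  unfolding hypersurface_def
  using assms open_U connected_U U_nonempty C1_parallel C1_parallel_normal parallel_normal_unit
    parallel_normal_orthogonal by blast

end

section \<open>The \<open>(f\<^sup>1\<^sub>s, f\<^sup>2\<^sub>s, \<phi>)\<close>-hypersurface\<close>

lemma separable_sum_const:
  fixes f :: "'a \<Rightarrow> real" and g :: "'b \<Rightarrow> real"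
  assumes sum: "\<And>x y. x \<in> A \<Longrightarrow> y \<in> B \<Longrightarrow> a * f x + b * g y = c" and a: "a \<noteq> 0" and y0: "y0 \<in> B"
  shows "\<exists>k. \<forall>x\<in>A. f x = k"
proof
  show "\<forall>x\<in>A. f x = (c - b * g y0) / a"
    using sum[OF _ y0] a by (simp add: field_simps)
qed

lemma u_slice_has_derivative: "((\<lambda>u'. ((u', q), s)) has_derivative (\<lambda>w. ((w, 0), 0))) (at u)"
  and q_slice_has_derivative: "((\<lambda>q'. ((u, q'), s)) has_derivative (\<lambda>w. ((0, w), 0))) (at q)"
  and s_slice_has_derivative: "((\<lambda>s'. ((u, q), s')) has_derivative (\<lambda>h. ((0, 0), h))) (at s)"
  by (auto intro!: derivative_eq_intros simp: zero_prod_def)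

locale fphi_cmc_hypersurface =
  F1: space_form_hypersurface e1 X1 \<eta>1 U1 + F2: space_form_hypersurface e2 X2 \<eta>2 U2
  for e1 :: real and X1 \<eta>1 :: "'c1::euclidean_space \<Rightarrow> 'b1::euclidean_space \<times> real" and U1
  and e2 :: real and X2 \<eta>2 :: "'c2::euclidean_space \<Rightarrow> 'b2::euclidean_space \<times> real" and U2 +
  fixes I :: "real set" and \<phi> :: "real \<Rightarrow> real"
    and \<nu> :: "('c1 \<times> 'c2) \<times> real \<Rightarrow> ('b1 \<times> real) \<times> ('b2 \<times> real)" and H :: real
  assumes dim1: "DIM('c1) + 1 = DIM('b1)" and dim2: "DIM('c2) + 1 = DIM('b2)"
    and open_I: "open I" and diffeo: "diffeo_on I \<phi>"
    and Sigma: "hypersurface (pform e1 e2) (Qspace e1 \<times> Qspace e2) (Ptangent e1 e2)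
                  (fphi_map e1 e2 X1 \<eta>1 X2 \<eta>2 \<phi>) \<nu> ((U1 \<times> U2) \<times> I)"
    and mean_curv_Sigma_const: "\<And>x. x \<in> (U1 \<times> U2) \<times> I \<Longrightarrow>
      mean_curv (pform e1 e2) (fphi_map e1 e2 X1 \<eta>1 X2 \<eta>2 \<phi>) \<nu> x = H"
begin

abbreviation "Phi \<equiv> fphi_map e1 e2 X1 \<eta>1 X2 \<eta>2 \<phi>"
abbreviation "f1 \<equiv> parallel e1 X1 \<eta>1"
abbreviation "f2 \<equiv> parallel e2 X2 \<eta>2"
abbreviation "N1 \<equiv> parallel_normal e1 X1 \<eta>1"
abbreviation "N2 \<equiv> parallel_normal e2 X2 \<eta>2"
abbreviation "df1 s u \<equiv> frechet_derivative (f1 s) (at u)"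
abbreviation "df2 t q \<equiv> frechet_derivative (f2 t) (at q)"
abbreviation "dN1 s u \<equiv> frechet_derivative (N1 s) (at u)"
abbreviation "dN2 t q \<equiv> frechet_derivative (N2 t) (at q)"
abbreviation "dPhi x \<equiv> frechet_derivative Phi (at x)"
abbreviation "d\<nu> x \<equiv> frechet_derivative \<nu> (at x)"

lemma Phi_Pair: "Phi ((u, q), s) = (f1 s u, f2 (\<phi> s) q)"
  by (simp add: fphi_map_def)

lemma C1_Phi: "C1_on ((U1 \<times> U2) \<times> I) Phi" and C1_\<nu>: "C1_on ((U1 \<times> U2) \<times> I) \<nu>"
  using Sigma unfolding hypersurface_def by auto

lemma
  assumes "x \<in> (U1 \<times> U2) \<times> I"
  shows Phi_Qspace: "Phi x \<in> Qspace e1 \<times> Qspace e2"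
    and inj_dPhi: "inj (dPhi x)"
    and dPhi_Ptangent: "dPhi x w \<in> Ptangent e1 e2 (Phi x)"
    and \<nu>_Ptangent: "\<nu> x \<in> Ptangent e1 e2 (Phi x)"
    and \<nu>_unit: "pform e1 e2 (\<nu> x) (\<nu> x) = 1"
    and \<nu>_orthogonal: "pform e1 e2 (\<nu> x) (dPhi x w) = 0"
    and Phi_has_derivative: "(Phi has_derivative dPhi x) (at x)"
    and \<nu>_has_derivative: "(\<nu> has_derivative d\<nu> x) (at x)"
    and Phi_differentiable: "Phi differentiable (at x)"
    and \<nu>_differentiable: "\<nu> differentiable (at x)"
  using Sigma assms C1_on_has_derivative[OF C1_Phi assms] C1_on_has_derivative[OF C1_\<nu> assms]
  unfolding hypersurface_def C1_on_def by blast+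

lemma linear_dPhi: "x \<in> (U1 \<times> U2) \<times> I \<Longrightarrow> linear (dPhi x)"
  and linear_d\<nu>: "x \<in> (U1 \<times> U2) \<times> I \<Longrightarrow> linear (d\<nu> x)"
  using Phi_has_derivative \<nu>_has_derivative has_derivative_linear by blast+

lemma DERIV_\<phi>: "s \<in> I \<Longrightarrow> (\<phi> has_real_derivative deriv \<phi> s) (at s)"
  using diffeo unfolding diffeo_on_def using DERIV_deriv_iff_real_differentiable by blast

text \<open>Differentiability of the inverse of \<open>\<phi>\<close> is what rules out \<open>\<phi>' = 0\<close>.\<close>

lemma deriv_\<phi>_nonzero: "s \<in> I \<Longrightarrow> deriv \<phi> s \<noteq> 0"
proof
  assume s: "s \<in> I" and z: "deriv \<phi> s = 0"
  let ?\<psi> = "the_inv_into I \<phi>"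
  obtain d where "(?\<psi> has_real_derivative d) (at (\<phi> s))"
    using diffeo s DERIV_deriv_iff_real_differentiable unfolding diffeo_on_def by blast
  from DERIV_chain[OF this DERIV_\<phi>[OF s]] z
  have "((?\<psi> \<circ> \<phi>) has_real_derivative 0) (at s)" by simp
  moreover have "((?\<psi> \<circ> \<phi>) has_real_derivative 1) (at s)"
    using diffeo unfolding diffeo_on_def
    by (intro has_field_derivative_transform_within_open[OF DERIV_ident open_I s])
      (simp add: the_inv_into_f_f)
  ultimately show False using DERIV_unique by fastforce
qed

lemma dPhi_u:
  assumes x: "u \<in> U1" "q \<in> U2" "s \<in> I"
  shows "dPhi ((u, q), s) ((w, 0), 0) = (df1 s u w, 0)"
proof -
  have "((\<lambda>u'. Phi ((u', q), s)) has_derivative (\<lambda>w. (df1 s u w, 0))) (at u)"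
    unfolding Phi_Pair
    by (intro has_derivative_Pair C1_on_has_derivative[OF F1.C1_parallel x(1)] has_derivative_const)
  from frechet_derivative_along[OF _ u_slice_has_derivative this] show ?thesis
    using Phi_differentiable x by simp
qed

lemma dPhi_q:
  assumes x: "u \<in> U1" "q \<in> U2" "s \<in> I"
  shows "dPhi ((u, q), s) ((0, w), 0) = (0, df2 (\<phi> s) q w)"
proof -
  have "((\<lambda>q'. Phi ((u, q'), s)) has_derivative (\<lambda>w. (0, df2 (\<phi> s) q w))) (at q)"
    unfolding Phi_Pair
    by (intro has_derivative_Pair C1_on_has_derivative[OF F2.C1_parallel x(2)] has_derivative_const)
  from frechet_derivative_along[OF _ q_slice_has_derivative this] show ?thesis
    using Phi_differentiable x by simp
qed

lemma f2_\<phi>_has_derivative: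
  assumes s: "s \<in> I"
  shows "((\<lambda>s'. f2 (\<phi> s') q) has_derivative (\<lambda>h. h *\<^sub>R (deriv \<phi> s *\<^sub>R N2 (\<phi> s) q))) (at s)"
proof -
  have "(\<phi> has_derivative (\<lambda>h. h * deriv \<phi> s)) (at s)"
    using DERIV_\<phi>[OF s] by (simp add: has_field_derivative_def mult_commute_abs)
  from diff_chain_at[OF this parallel_has_vector_derivative[unfolded has_vector_derivative_def]]
  show ?thesis by (simp add: o_def)
qed

lemma dPhi_s:
  assumes x: "u \<in> U1" "q \<in> U2" "s \<in> I"
  shows "dPhi ((u, q), s) ((0, 0), h) = h *\<^sub>R (N1 s u, deriv \<phi> s *\<^sub>R N2 (\<phi> s) q)"
proof -
  have "((\<lambda>s'. Phi ((u, q), s')) has_derivative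
      (\<lambda>h. h *\<^sub>R (N1 s u, deriv \<phi> s *\<^sub>R N2 (\<phi> s) q))) (at s)"
    unfolding Phi_Pair
    using has_derivative_Pair[OF parallel_has_vector_derivative[unfolded has_vector_derivative_def]
        f2_\<phi>_has_derivative[OF x(3)]]
    by simp
  from frechet_derivative_along[OF _ s_slice_has_derivative this] show ?thesis
    using Phi_differentiable x by simp
qed

lemma dPhi_eq:
  assumes x: "u \<in> U1" "q \<in> U2" "s \<in> I"
  shows "dPhi ((u, q), s) ((v1, v2), h) =
    (df1 s u v1 + h *\<^sub>R N1 s u, df2 (\<phi> s) q v2 + (h * deriv \<phi> s) *\<^sub>R N2 (\<phi> s) q)"
proof -
  have "((v1, v2), h) = ((v1, 0), 0) + ((0, v2), 0) + ((0, 0), h)" by simp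
  then have "dPhi ((u, q), s) ((v1, v2), h) = dPhi ((u, q), s) ((v1, 0), 0)
      + dPhi ((u, q), s) ((0, v2), 0) + dPhi ((u, q), s) ((0, 0), h)"
    using x by (metis linear_add[OF linear_dPhi] mem_Sigma_iff)
  then show ?thesis by (simp add: dPhi_u[OF x] dPhi_q[OF x] dPhi_s[OF x])
qed

lemma pform_dPhi:
  assumes x: "u \<in> U1" "q \<in> U2" "s \<in> I"
  shows "pform e1 e2 (dPhi ((u, q), s) ((v1, v2), h)) (dPhi ((u, q), s) ((w1, w2), k)) =
    qform e1 (df1 s u v1) (df1 s u w1) + qform e2 (df2 (\<phi> s) q v2) (df2 (\<phi> s) q w2)
    + h * k * (1 + (deriv \<phi> s)\<^sup>2)"
proof -
  have "qform e1 (df1 s u v) (N1 s u) = 0" "qform e2 (df2 (\<phi> s) q v') (N2 (\<phi> s) q) = 0" for v v'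
    using F1.parallel_normal_orthogonal F2.parallel_normal_orthogonal x qform_commute by metis+
  then show ?thesis
    unfolding dPhi_eq[OF x] pform_Pair
    using x by (simp add: qform_simps F1.parallel_normal_orthogonal F2.parallel_normal_orthogonal
        F1.parallel_normal_unit F2.parallel_normal_unit power2_eq_square algebra_simps)
qed

lemma f1_slice:
  assumes x: "u \<in> U1" "q \<in> U2" "s \<in> I"
  shows "f1 s u \<in> Qspace e1" "linear (df1 s u)" "inj (df1 s u)"
    "\<And>w. df1 s u w \<in> Qtangent e1 (f1 s u)" "N1 s u \<in> Qtangent e1 (f1 s u)"
    "fst (\<nu> ((u, q), s)) \<in> Qtangent e1 (f1 s u)"
    "\<And>w. qform e1 (fst (\<nu> ((u, q), s))) (df1 s u w) = 0"
proof -
  have xD: "((u, q), s) \<in> (U1 \<times> U2) \<times> I" using x by simp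
  show "f1 s u \<in> Qspace e1" using Phi_Qspace[OF xD] by (simp add: Phi_Pair)
  show "linear (df1 s u)"
    by (rule has_derivative_linear[OF C1_on_has_derivative[OF F1.C1_parallel x(1)]])
  show "inj (df1 s u)"
  proof (rule injI)
    fix w w' assume "df1 s u w = df1 s u w'"
    then have "dPhi ((u, q), s) ((w, 0), 0) = dPhi ((u, q), s) ((w', 0), 0)"
      by (simp add: dPhi_u[OF x])
    then show "w = w'" using injD[OF inj_dPhi[OF xD]] by blast
  qed
  show "df1 s u w \<in> Qtangent e1 (f1 s u)" for w
    using dPhi_Ptangent[OF xD, of "((w, 0), 0)"] by (simp add: dPhi_u[OF x] Ptangent_def Phi_Pair)
  show "N1 s u \<in> Qtangent e1 (f1 s u)"
    using dPhi_Ptangent[OF xD, of "((0, 0), 1)"] by (simp add: dPhi_s[OF x] Ptangent_def Phi_Pair)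
  show "fst (\<nu> ((u, q), s)) \<in> Qtangent e1 (f1 s u)"
    using \<nu>_Ptangent[OF xD] by (simp add: Ptangent_def Phi_Pair mem_Times_iff)
  show "qform e1 (fst (\<nu> ((u, q), s))) (df1 s u w) = 0" for w
    using \<nu>_orthogonal[OF xD, of "((w, 0), 0)"] by (simp add: dPhi_u[OF x] pform_def qform_simps)
qed

lemma f2_slice:
  assumes x: "u \<in> U1" "q \<in> U2" "s \<in> I"
  shows "f2 (\<phi> s) q \<in> Qspace e2" "linear (df2 (\<phi> s) q)" "inj (df2 (\<phi> s) q)"
    "\<And>w. df2 (\<phi> s) q w \<in> Qtangent e2 (f2 (\<phi> s) q)" "N2 (\<phi> s) q \<in> Qtangent e2 (f2 (\<phi> s) q)"
    "snd (\<nu> ((u, q), s)) \<in> Qtangent e2 (f2 (\<phi> s) q)"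
    "\<And>w. qform e2 (snd (\<nu> ((u, q), s))) (df2 (\<phi> s) q w) = 0"
proof -
  have xD: "((u, q), s) \<in> (U1 \<times> U2) \<times> I" using x by simp
  show "f2 (\<phi> s) q \<in> Qspace e2" using Phi_Qspace[OF xD] by (simp add: Phi_Pair)
  show "linear (df2 (\<phi> s) q)"
    by (rule has_derivative_linear[OF C1_on_has_derivative[OF F2.C1_parallel x(2)]])
  show "inj (df2 (\<phi> s) q)"
  proof (rule injI)
    fix w w' assume "df2 (\<phi> s) q w = df2 (\<phi> s) q w'"
    then have "dPhi ((u, q), s) ((0, w), 0) = dPhi ((u, q), s) ((0, w'), 0)"
      by (simp add: dPhi_q[OF x])
    then show "w = w'" using injD[OF inj_dPhi[OF xD]] by blast
  qed
  show "df2 (\<phi> s) q w \<in> Qtangent e2 (f2 (\<phi> s) q)" for w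
    using dPhi_Ptangent[OF xD, of "((0, w), 0)"] by (simp add: dPhi_q[OF x] Ptangent_def Phi_Pair)
  have "deriv \<phi> s *\<^sub>R N2 (\<phi> s) q \<in> Qtangent e2 (f2 (\<phi> s) q)"
    using dPhi_Ptangent[OF xD, of "((0, 0), 1)"] by (simp add: dPhi_s[OF x] Ptangent_def Phi_Pair)
  then have "(1 / deriv \<phi> s) *\<^sub>R (deriv \<phi> s *\<^sub>R N2 (\<phi> s) q) \<in> Qtangent e2 (f2 (\<phi> s) q)"
    by (rule subspace_scale[OF subspace_Qtangent])
  then show "N2 (\<phi> s) q \<in> Qtangent e2 (f2 (\<phi> s) q)" using deriv_\<phi>_nonzero[OF x(3)] by simp
  show "snd (\<nu> ((u, q), s)) \<in> Qtangent e2 (f2 (\<phi> s) q)"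
    using \<nu>_Ptangent[OF xD] by (simp add: Ptangent_def Phi_Pair mem_Times_iff)
  show "qform e2 (snd (\<nu> ((u, q), s))) (df2 (\<phi> s) q w) = 0" for w
    using \<nu>_orthogonal[OF xD, of "((0, w), 0)"] by (simp add: dPhi_q[OF x] pform_def qform_simps)
qed


definition nu_coeff1 :: "('c1 \<times> 'c2) \<times> real \<Rightarrow> real" where
  "nu_coeff1 x = qform e1 (fst (\<nu> x)) (N1 (snd x) (fst (fst x)))"

definition nu_coeff2 :: "('c1 \<times> 'c2) \<times> real \<Rightarrow> real" where
  "nu_coeff2 x = qform e2 (snd (\<nu> x)) (N2 (\<phi> (snd x)) (snd (fst x)))"

lemma \<nu>_components:
  assumes x: "u \<in> U1" "q \<in> U2" "s \<in> I"
  shows "\<nu> ((u, q), s) = (nu_coeff1 ((u, q), s) *\<^sub>R N1 s u, nu_coeff2 ((u, q), s) *\<^sub>R N2 (\<phi> s) q)"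
proof -
  have "fst (\<nu> ((u, q), s)) = nu_coeff1 ((u, q), s) *\<^sub>R N1 s u"
    unfolding nu_coeff1_def
    using Qtangent_orthogonal_image_eq[OF dim1 f1_slice(1-5)[OF x]
        F1.parallel_normal_unit F1.parallel_normal_orthogonal f1_slice(6,7)[OF x]] x by simp
  moreover have "snd (\<nu> ((u, q), s)) = nu_coeff2 ((u, q), s) *\<^sub>R N2 (\<phi> s) q"
    unfolding nu_coeff2_def
    using Qtangent_orthogonal_image_eq[OF dim2 f2_slice(1-5)[OF x]
        F2.parallel_normal_unit F2.parallel_normal_orthogonal f2_slice(6,7)[OF x]] x by simp
  ultimately show ?thesis by (metis prod.collapse)
qed

text \<open>From \<open>|\<nu>| = 1\<close> and \<open>\<nu> \<bottom> \<partial>\<^sub>s\<Phi> = (N\<^sub>1, \<phi>' N\<^sub>2)\<close>.\<close>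

lemma nu_coeff_relations:
  assumes x: "u \<in> U1" "q \<in> U2" "s \<in> I"
  shows "nu_coeff1 ((u, q), s) = - deriv \<phi> s * nu_coeff2 ((u, q), s)"
    and "nu_coeff2 ((u, q), s) * nu_coeff2 ((u, q), s) = 1 / (1 + (deriv \<phi> s)\<^sup>2)"
proof -
  let ?a = "nu_coeff1 ((u, q), s)" and ?b = "nu_coeff2 ((u, q), s)" and ?d = "deriv \<phi> s"
  have xD: "((u, q), s) \<in> (U1 \<times> U2) \<times> I" using x by simp
  have unit: "?a * ?a + ?b * ?b = 1"
    using \<nu>_unit[OF xD] x unfolding \<nu>_components[OF x]
    by (simp add: pform_Pair qform_simps F1.parallel_normal_unit F2.parallel_normal_unit)
  show a: "?a = - ?d * ?b"
    using \<nu>_orthogonal[OF xD, of "((0, 0), 1)"] x unfolding \<nu>_components[OF x] dPhi_s[OF x]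
    by (simp add: pform_Pair qform_simps F1.parallel_normal_unit F2.parallel_normal_unit)
  have "?b * ?b * (1 + ?d\<^sup>2) = 1" using unit unfolding a by (simp add: power2_eq_square algebra_simps)
  moreover have "1 + ?d\<^sup>2 > 0" by (simp add: add_pos_nonneg)
  ultimately show "?b * ?b = 1 / (1 + ?d\<^sup>2)" by (simp add: field_simps)
qed

lemma nu_coeff2_nonzero:
  assumes x: "u \<in> U1" "q \<in> U2" "s \<in> I"
  shows "nu_coeff2 ((u, q), s) \<noteq> 0"
proof
  assume "nu_coeff2 ((u, q), s) = 0"
  moreover have "1 + (deriv \<phi> s)\<^sup>2 > 0" by (simp add: add_pos_nonneg)
  ultimately show False using nu_coeff_relations(2)[OF x] by simp
qed

lemma continuous_on_nu_coeff2:
  assumes s: "s \<in> I"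
  shows "continuous_on (U1 \<times> U2) (\<lambda>y. nu_coeff2 (y, s))"
proof -
  have "continuous_on (U1 \<times> U2) (\<lambda>y. \<nu> (y, s))"
    by (rule continuous_on_compose2[OF C1_on_continuous_on[OF C1_\<nu>]])
      (use s in \<open>auto intro!: continuous_intros\<close>)
  moreover have "continuous_on (U1 \<times> U2) (\<lambda>y. N2 (\<phi> s) (snd y))"
    by (rule continuous_on_compose2[OF C1_on_continuous_on[OF F2.C1_parallel_normal] continuous_on_snd])
      auto
  ultimately show ?thesis
    unfolding nu_coeff2_def
    by (intro bounded_bilinear.continuous_on[OF bounded_bilinear_qform] continuous_on_snd) simp_all
qed

text \<open>A continuous function on the connected set \<open>U\<^sub>1 \<times> U\<^sub>2\<close> whose values lie in the two-point
  set \<open>{\<plusminus>1/W}\<close> is constant.\<close>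

lemma nu_coeff2_indep:
  assumes s: "s \<in> I" and y: "y \<in> U1 \<times> U2" and y': "y' \<in> U1 \<times> U2"
  shows "nu_coeff2 (y, s) = nu_coeff2 (y', s)"
proof -
  let ?f = "\<lambda>y. nu_coeff2 (y, s)"
  have sq: "?f y * ?f y = 1 / (1 + (deriv \<phi> s)\<^sup>2)" and nz: "?f y \<noteq> 0"
    if "y \<in> U1 \<times> U2" for y
    using nu_coeff_relations(2)[of "fst y" "snd y" s] nu_coeff2_nonzero[of "fst y" "snd y" s] that s
    by (auto simp: mem_Times_iff)
  have "?f constant_on (U1 \<times> U2)"
  proof (rule continuous_discrete_range_constant)
    show "connected (U1 \<times> U2)" using F1.connected_U F2.connected_U by (rule connected_Times)
    show "continuous_on (U1 \<times> U2) ?f" by (rule continuous_on_nu_coeff2[OF s])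
    fix z assume z: "z \<in> U1 \<times> U2"
    show "\<exists>e>0. \<forall>y. y \<in> U1 \<times> U2 \<and> ?f y \<noteq> ?f z \<longrightarrow> e \<le> norm (?f y - ?f z)"
    proof (intro exI[of _ "2 * \<bar>?f z\<bar>"] conjI allI impI)
      show "0 < 2 * \<bar>?f z\<bar>" using nz[OF z] by simp
      fix y assume y: "y \<in> U1 \<times> U2 \<and> ?f y \<noteq> ?f z"
      then have "(?f y - ?f z) * (?f y + ?f z) = 0"
        using sq[of y] sq[OF z] by (simp add: algebra_simps)
      then have "?f y = - ?f z" using y by simp
      then show "2 * \<bar>?f z\<bar> \<le> norm (?f y - ?f z)" by simp
    qed
  qed
  then show ?thesis using y y' unfolding constant_on_def by metis
qed

definition u0 :: 'c1 where "u0 = (SOME u. u \<in> U1)"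
definition q0 :: 'c2 where "q0 = (SOME q. q \<in> U2)"

lemma u0: "u0 \<in> U1" and q0: "q0 \<in> U2"
  unfolding u0_def q0_def using F1.U_nonempty F2.U_nonempty by (simp_all add: some_in_eq)

definition alpha :: "real \<Rightarrow> real" where "alpha s = nu_coeff1 ((u0, q0), s)"
definition beta :: "real \<Rightarrow> real" where "beta s = nu_coeff2 ((u0, q0), s)"

lemma nu_coeff2_eq: "u \<in> U1 \<Longrightarrow> q \<in> U2 \<Longrightarrow> s \<in> I \<Longrightarrow> nu_coeff2 ((u, q), s) = beta s"
  unfolding beta_def using nu_coeff2_indep u0 q0 by simp

lemma nu_coeff1_eq: "u \<in> U1 \<Longrightarrow> q \<in> U2 \<Longrightarrow> s \<in> I \<Longrightarrow> nu_coeff1 ((u, q), s) = alpha s"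
  unfolding alpha_def using nu_coeff_relations(1) nu_coeff2_eq u0 q0 by simp

lemma alpha_nonzero: "s \<in> I \<Longrightarrow> alpha s \<noteq> 0"
  and beta_nonzero: "s \<in> I \<Longrightarrow> beta s \<noteq> 0"
  using nu_coeff_relations(1)[OF u0 q0] nu_coeff2_nonzero[OF u0 q0] deriv_\<phi>_nonzero
  unfolding alpha_def beta_def by auto

lemma \<nu>_eq:
  "u \<in> U1 \<Longrightarrow> q \<in> U2 \<Longrightarrow> s \<in> I \<Longrightarrow> \<nu> ((u, q), s) = (alpha s *\<^sub>R N1 s u, beta s *\<^sub>R N2 (\<phi> s) q)"
  using \<nu>_components nu_coeff1_eq nu_coeff2_eq by simp

lemma \<nu>_s_has_derivative:
  assumes x: "u \<in> U1" "q \<in> U2" "s \<in> I"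
  shows "((\<lambda>s'. \<nu> ((u, q), s')) has_derivative (\<lambda>h. d\<nu> ((u, q), s) ((0, 0), h))) (at s)"
  using diff_chain_at[OF s_slice_has_derivative \<nu>_has_derivative] x by (simp add: o_def)

lemma N2_\<phi>_has_vector_derivative:
  assumes s: "s \<in> I"
  shows "((\<lambda>s'. N2 (\<phi> s') q) has_vector_derivative
    deriv \<phi> s *\<^sub>R ((- e2) *\<^sub>R f2 (\<phi> s) q)) (at s)"
proof -
  have "(\<phi> has_vector_derivative deriv \<phi> s) (at s)"
    using DERIV_\<phi>[OF s] by (simp add: has_real_derivative_iff_has_vector_derivative)
  from vector_diff_chain_at[OF this parallel_normal_has_vector_derivative]
  show ?thesis by (simp add: o_def)
qed

lemma DERIV_alpha:
  assumes s: "s \<in> I"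
  shows "(alpha has_real_derivative deriv alpha s) (at s)"
proof -
  have eq: "alpha = (\<lambda>s'. qform e1 (fst (\<nu> ((u0, q0), s'))) (N1 s' u0))"
    by (simp add: fun_eq_iff alpha_def nu_coeff1_def)
  have "((\<lambda>s'. qform e1 (fst (\<nu> ((u0, q0), s'))) (N1 s' u0)) has_derivative
      (\<lambda>h. qform e1 (fst (\<nu> ((u0, q0), s))) (h *\<^sub>R ((- e1) *\<^sub>R f1 s u0))
        + qform e1 (fst (d\<nu> ((u0, q0), s) ((0, 0), h))) (N1 s u0))) (at s)"
    by (rule bounded_bilinear.FDERIV[OF bounded_bilinear_qform
          has_derivative_fst[OF \<nu>_s_has_derivative[OF u0 q0 s]]
          parallel_normal_has_vector_derivative[unfolded has_vector_derivative_def]])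
  then have "alpha differentiable (at s)" unfolding eq differentiable_def by blast
  then show ?thesis using DERIV_deriv_iff_real_differentiable by blast
qed

lemma DERIV_beta:
  assumes s: "s \<in> I"
  shows "(beta has_real_derivative deriv beta s) (at s)"
proof -
  have eq: "beta = (\<lambda>s'. qform e2 (snd (\<nu> ((u0, q0), s'))) (N2 (\<phi> s') q0))"
    by (simp add: fun_eq_iff beta_def nu_coeff2_def)
  have "((\<lambda>s'. qform e2 (snd (\<nu> ((u0, q0), s'))) (N2 (\<phi> s') q0)) has_derivative
      (\<lambda>h. qform e2 (snd (\<nu> ((u0, q0), s))) (h *\<^sub>R (deriv \<phi> s *\<^sub>R ((- e2) *\<^sub>R f2 (\<phi> s) q0)))
        + qform e2 (snd (d\<nu> ((u0, q0), s) ((0, 0), h))) (N2 (\<phi> s) q0))) (at s)"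
    by (rule bounded_bilinear.FDERIV[OF bounded_bilinear_qform
          has_derivative_snd[OF \<nu>_s_has_derivative[OF u0 q0 s]]
          N2_\<phi>_has_vector_derivative[OF s, unfolded has_vector_derivative_def]])
  then have "beta differentiable (at s)" unfolding eq differentiable_def by blast
  then show ?thesis using DERIV_deriv_iff_real_differentiable by blast
qed

lemma d\<nu>_s:
  assumes x: "u \<in> U1" "q \<in> U2" "s \<in> I"
  shows "d\<nu> ((u, q), s) ((0, 0), h) = h *\<^sub>R
     (alpha s *\<^sub>R ((- e1) *\<^sub>R f1 s u) + deriv alpha s *\<^sub>R N1 s u,
      beta s *\<^sub>R (deriv \<phi> s *\<^sub>R ((- e2) *\<^sub>R f2 (\<phi> s) q)) + deriv beta s *\<^sub>R N2 (\<phi> s) q)"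
proof -
  have "((\<lambda>s'. (alpha s' *\<^sub>R N1 s' u, beta s' *\<^sub>R N2 (\<phi> s') q)) has_derivative (\<lambda>h. h *\<^sub>R
     (alpha s *\<^sub>R ((- e1) *\<^sub>R f1 s u) + deriv alpha s *\<^sub>R N1 s u,
      beta s *\<^sub>R (deriv \<phi> s *\<^sub>R ((- e2) *\<^sub>R f2 (\<phi> s) q)) + deriv beta s *\<^sub>R N2 (\<phi> s) q))) (at s)"
    using has_derivative_Pair[OF
        has_vector_derivative_scaleR[OF DERIV_alpha[OF x(3)] parallel_normal_has_vector_derivative,
          unfolded has_vector_derivative_def]
        has_vector_derivative_scaleR[OF DERIV_beta[OF x(3)] N2_\<phi>_has_vector_derivative[OF x(3)],
          unfolded has_vector_derivative_def]]
    by simp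
  then have "((\<lambda>s'. \<nu> ((u, q), s')) has_derivative (\<lambda>h. h *\<^sub>R
     (alpha s *\<^sub>R ((- e1) *\<^sub>R f1 s u) + deriv alpha s *\<^sub>R N1 s u,
      beta s *\<^sub>R (deriv \<phi> s *\<^sub>R ((- e2) *\<^sub>R f2 (\<phi> s) q)) + deriv beta s *\<^sub>R N2 (\<phi> s) q))) (at s)"
    by (rule has_derivative_transform_within_open[OF _ open_I x(3)]) (simp add: \<nu>_eq x)
  from has_derivative_unique[OF \<nu>_s_has_derivative[OF x] this] show ?thesis by metis
qed

text \<open>The contribution of the \<open>s\<close>-direction to the trace of the shape operator of \<open>\<Sigma>\<close>
  (times \<open>W\<^sup>2\<close>); it depends on \<open>s\<close> only.\<close>

definition s_curvature :: "real \<Rightarrow> real" where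
  "s_curvature s = deriv alpha s + deriv \<phi> s * deriv beta s"

lemma pform_d\<nu>_dPhi_s:
  assumes x: "u \<in> U1" "q \<in> U2" "s \<in> I"
  shows "pform e1 e2 (d\<nu> ((u, q), s) ((0, 0), h)) (dPhi ((u, q), s) ((0, 0), h)) =
    h * h * s_curvature s"
proof -
  have "e1 * qform e1 (f1 s u) (N1 s u) = 0"
    using f1_slice(5)[OF x] by (cases "e1 = 0") (auto simp: Qtangent_def)
  moreover have "e2 * qform e2 (f2 (\<phi> s) q) (N2 (\<phi> s) q) = 0"
    using f2_slice(5)[OF x] by (cases "e2 = 0") (auto simp: Qtangent_def)
  ultimately show ?thesis
    unfolding d\<nu>_s[OF x] dPhi_s[OF x] s_curvature_def
    using F1.parallel_normal_unit[OF x(1)] F2.parallel_normal_unit[OF x(2)]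
    by (cases "e1 = 0"; cases "e2 = 0") (simp_all add: pform_def qform_simps algebra_simps)
qed

lemma d\<nu>_u:
  assumes x: "u \<in> U1" "q \<in> U2" "s \<in> I"
  shows "d\<nu> ((u, q), s) ((w, 0), 0) = (alpha s *\<^sub>R dN1 s u w, 0)"
proof -
  have "((\<lambda>u'. (alpha s *\<^sub>R N1 s u', beta s *\<^sub>R N2 (\<phi> s) q)) has_derivative
      (\<lambda>w. (alpha s *\<^sub>R dN1 s u w, 0))) (at u)"
    using C1_on_has_derivative[OF F1.C1_parallel_normal x(1)] by (auto intro!: derivative_eq_intros)
  then have "((\<lambda>u'. \<nu> ((u', q), s)) has_derivative (\<lambda>w. (alpha s *\<^sub>R dN1 s u w, 0))) (at u)"
    by (rule has_derivative_transform_within_open[OF _ F1.open_U x(1)]) (simp add: \<nu>_eq x)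
  from frechet_derivative_along[OF _ u_slice_has_derivative this] show ?thesis
    using \<nu>_differentiable x by simp
qed

lemma d\<nu>_q:
  assumes x: "u \<in> U1" "q \<in> U2" "s \<in> I"
  shows "d\<nu> ((u, q), s) ((0, w), 0) = (0, beta s *\<^sub>R dN2 (\<phi> s) q w)"
proof -
  have "((\<lambda>q'. (alpha s *\<^sub>R N1 s u, beta s *\<^sub>R N2 (\<phi> s) q')) has_derivative
      (\<lambda>w. (0, beta s *\<^sub>R dN2 (\<phi> s) q w))) (at q)"
    using C1_on_has_derivative[OF F2.C1_parallel_normal x(2)] by (auto intro!: derivative_eq_intros)
  then have "((\<lambda>q'. \<nu> ((u, q'), s)) has_derivative (\<lambda>w. (0, beta s *\<^sub>R dN2 (\<phi> s) q w))) (at q)"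
    by (rule has_derivative_transform_within_open[OF _ F2.open_U x(2)]) (simp add: \<nu>_eq x)
  from frechet_derivative_along[OF _ q_slice_has_derivative this] show ?thesis
    using \<nu>_differentiable x by simp
qed

lemma mean_curv_Sigma:
  assumes x: "u \<in> U1" "q \<in> U2" "s \<in> I"
  shows "mean_curv (pform e1 e2) Phi \<nu> ((u, q), s) =
    alpha s * mean_curv (qform e1) (f1 s) (N1 s) u
    + beta s * mean_curv (qform e2) (f2 (\<phi> s)) (N2 (\<phi> s)) q
    - s_curvature s / (1 + (deriv \<phi> s)\<^sup>2)"
proof -
  have xD: "((u, q), s) \<in> (U1 \<times> U2) \<times> I" using x by simp
  obtain W1 where W1: "orthonormal_frame (\<lambda>v w. qform e1 (df1 s u v) (df1 s u w)) W1"
    using immersion_orthonormal_frame_exists[OF f1_slice(1-4)[OF x]] by blast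
  obtain W2 where W2: "orthonormal_frame (\<lambda>v w. qform e2 (df2 (\<phi> s) q v) (df2 (\<phi> s) q w)) W2"
    using immersion_orthonormal_frame_exists[OF f2_slice(1-4)[OF x]] by blast
  define r where "r = 1 / sqrt (1 + (deriv \<phi> s)\<^sup>2)"
  have pos: "1 + (deriv \<phi> s)\<^sup>2 > 0" by (simp add: add_pos_nonneg)
  then have r2: "r * r = 1 / (1 + (deriv \<phi> s)\<^sup>2)"
    unfolding r_def by (simp add: power2_eq_square[symmetric] power_divide)
  then have r1: "r * r * (1 + (deriv \<phi> s)\<^sup>2) = 1" using pos by simp
  note bil = bilinear_qform_linear[OF f1_slice(2)[OF x]] bilinear_qform_linear[OF f2_slice(2)[OF x]]
  let ?W = "product_frame W1 W2 r"
  let ?B = "\<lambda>z. pform e1 e2 (d\<nu> ((u, q), s) (?W z)) (dPhi ((u, q), s) (?W z))"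
  have "mean_curv (pform e1 e2) Phi \<nu> ((u, q), s) = - (\<Sum>z\<in>Basis. ?B z)"
    by (rule mean_curv_orthonormal_frame[OF pform_bilinear pform_commute linear_dPhi[OF xD]
          linear_d\<nu>[OF xD] orthonormal_frame_product[OF pform_dPhi[OF x] bil W1 W2 r1]])
  also have "(\<Sum>z\<in>Basis. ?B z) = (\<Sum>i\<in>Basis. ?B ((i, 0), 0)) + (\<Sum>i\<in>Basis. ?B ((0, i), 0))
      + ?B ((0, 0), 1)"
    by (simp add: sum_Basis_prod Basis_real_def zero_prod_def)
  also have "(\<Sum>i\<in>Basis. ?B ((i, 0), 0)) =
      alpha s * (\<Sum>i\<in>Basis. qform e1 (dN1 s u (W1 i)) (df1 s u (W1 i)))"
    by (simp add: sum_distrib_left product_frame_def nonzero_Basis d\<nu>_u[OF x] dPhi_u[OF x]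
        pform_Pair qform_simps)
  also have "(\<Sum>i\<in>Basis. ?B ((0, i), 0)) =
      beta s * (\<Sum>i\<in>Basis. qform e2 (dN2 (\<phi> s) q (W2 i)) (df2 (\<phi> s) q (W2 i)))"
    by (simp add: sum_distrib_left product_frame_def nonzero_Basis d\<nu>_q[OF x] dPhi_q[OF x]
        pform_Pair qform_simps)
  also have "?B ((0, 0), 1) = s_curvature s / (1 + (deriv \<phi> s)\<^sup>2)"
    using pform_d\<nu>_dPhi_s[OF x, of r] r2 by (simp add: product_frame_def nonzero_Basis)
  finally show ?thesis
    using mean_curv_orthonormal_frame[OF qform_bilinear qform_commute f1_slice(2)[OF x]
        F1.linear_dN[OF x(1)] W1]
      mean_curv_orthonormal_frame[OF qform_bilinear qform_commute f2_slice(2)[OF x]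
        F2.linear_dN[OF x(2)] W2]
    by simp
qed

lemma parallel_families_cmc:
  assumes s: "s \<in> I"
  shows "cmc (qform e1) (Qspace e1) (Qtangent e1) (f1 s) U1"
    and "cmc (qform e2) (Qspace e2) (Qtangent e2) (f2 (\<phi> s)) U2"
proof -
  let ?H1 = "mean_curv (qform e1) (f1 s) (N1 s)"
  let ?H2 = "mean_curv (qform e2) (f2 (\<phi> s)) (N2 (\<phi> s))"
  let ?c = "H + s_curvature s / (1 + (deriv \<phi> s)\<^sup>2)"
  have sep: "alpha s * ?H1 u + beta s * ?H2 q = ?c" if "u \<in> U1" "q \<in> U2" for u q
    using mean_curv_Sigma[OF that s] mean_curv_Sigma_const[of "((u, q), s)"] that s by simp
  then have sep': "beta s * ?H2 q + alpha s * ?H1 u = ?c" if "q \<in> U2" "u \<in> U1" for q u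
    using that by (simp add: add.commute)
  have "hypersurface (qform e1) (Qspace e1) (Qtangent e1) (f1 s) (N1 s) U1"
    by (rule F1.parallel_hypersurface[OF f1_slice(1,3,4,5)[OF _ q0 s]])
  moreover obtain k1 where "\<forall>u\<in>U1. ?H1 u = k1"
    using separable_sum_const[where f = ?H1 and g = ?H2, OF sep alpha_nonzero[OF s] q0] by blast
  ultimately show "cmc (qform e1) (Qspace e1) (Qtangent e1) (f1 s) U1"
    unfolding cmc_def by blast
  have "hypersurface (qform e2) (Qspace e2) (Qtangent e2) (f2 (\<phi> s)) (N2 (\<phi> s)) U2"
    by (rule F2.parallel_hypersurface[OF f2_slice(1,3,4,5)[OF u0 _ s]])
  moreover obtain k2 where "\<forall>q\<in>U2. ?H2 q = k2"
    using separable_sum_const[where f = ?H2 and g = ?H1, OF sep' beta_nonzero[OF s] u0] by blast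
  ultimately show "cmc (qform e2) (Qspace e2) (Qtangent e2) (f2 (\<phi> s)) U2"
    unfolding cmc_def by blast
qed

end

theorem lemma2:
  fixes e1 e2 :: real
    and X1 \<eta>1 :: "'c1::euclidean_space \<Rightarrow> 'b1::euclidean_space \<times> real"
    and X2 \<eta>2 :: "'c2::euclidean_space \<Rightarrow> 'b2::euclidean_space \<times> real"
    and U1 :: "'c1 set" and U2 :: "'c2 set" and I :: "real set" and \<phi> :: "real \<Rightarrow> real"
  assumes dim1: "DIM('b1) \<ge> 2" "DIM('c1) + 1 = DIM('b1)"
    and dim2: "DIM('b2) \<ge> 2" "DIM('c2) + 1 = DIM('b2)"
    and M1: "hypersurface (qform e1) (Qspace e1) (Qtangent e1) X1 \<eta>1 U1"
    and M2: "hypersurface (qform e2) (Qspace e2) (Qtangent e2) X2 \<eta>2 U2"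
    and I: "is_interval I" "open I" "I \<noteq> {}"
    and phi: "diffeo_on I \<phi>"
    and Sigma: "cmc (pform e1 e2) (Qspace e1 \<times> Qspace e2) (Ptangent e1 e2)
                  (fphi_map e1 e2 X1 \<eta>1 X2 \<eta>2 \<phi>) ((U1 \<times> U2) \<times> I)"
  shows "\<forall>s\<in>I. cmc (qform e1) (Qspace e1) (Qtangent e1) (parallel e1 X1 \<eta>1 s) U1 \<and>
               cmc (qform e2) (Qspace e2) (Qtangent e2) (parallel e2 X2 \<eta>2 (\<phi> s)) U2"
proof -
  obtain \<nu> H where hs: "hypersurface (pform e1 e2) (Qspace e1 \<times> Qspace e2) (Ptangent e1 e2)
      (fphi_map e1 e2 X1 \<eta>1 X2 \<eta>2 \<phi>) \<nu> ((U1 \<times> U2) \<times> I)"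
    and H: "\<forall>x\<in>(U1 \<times> U2) \<times> I. mean_curv (pform e1 e2) (fphi_map e1 e2 X1 \<eta>1 X2 \<eta>2 \<phi>) \<nu> x = H"
    using Sigma unfolding cmc_def by blast
  interpret fphi_cmc_hypersurface e1 X1 \<eta>1 U1 e2 X2 \<eta>2 U2 I \<phi> \<nu> H
    by (intro fphi_cmc_hypersurface.intro space_form_hypersurface.intro
        fphi_cmc_hypersurface_axioms.intro M1 M2 dim1(2) dim2(2) I(2) phi hs) (use H in blast)
  show ?thesis using parallel_families_cmc by blast
qed

end
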